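(* Let $d_\Phi=1$, let $\beta_\Phi\in\mathbb{R}^{d_Z}$ have all components nonzero, let $\beta_y\in\mathbb{R}^{d_Z}$, and let $b$ be an integer with $0\le b<d_Z$. Then $\mathcal{T}_{L_0}(b)=\{\theta\in\mathbb{R}:\|\beta_y-\theta\beta_\Phi\|_0\le b\}$ satisfies $$|\mathcal{T}_{L_0}(b)|\le\left\lfloor\frac{d_Z}{d_Z-b}\right\rfloor\le d_Z.$$ In particular, if $b<d_Z/2$ then $|\mathcal{T}_{L_0}(b)|\le1$ (point identification).
   Context: $\|v\|_0$ is the number of nonzero components of $v$. In the model $Y:=\theta^*\Phi(X)+g_y(Z,\epsilon_y)$ with scalar $\Phi$, $\beta_\Phi=\mathrm{Cov}(\Phi(X),Z)$, $\beta_y=\mathrm{Cov}(Y,Z)$, and $\|\beta_y-\theta\beta_\Phi\|_0\le b$ expresses that at most $b$ of the $d_Z$ candidate instruments are invalid. *)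

theory Defs
  imports "HOL-Analysis.Analysis"
begin

definition l0norm :: "real ^ 'n \<Rightarrow> nat" where
  "l0norm v = card {i. v $ i \<noteq> 0}"

definition T_L0 :: "real ^ 'n \<Rightarrow> real ^ 'n \<Rightarrow> nat \<Rightarrow> real set" where
  "T_L0 beta_y beta_Phi b = {theta. l0norm (beta_y - theta *\<^sub>R beta_Phi) \<le> b}"

end

theory Submission
  imports Defs
begin

text \<open>Every \<open>\<theta>\<close> in the identified set makes \<open>\<beta>\<^sub>y\<close> and \<open>\<theta> \<beta>\<^sub>\<Phi>\<close> agree on at least
  \<open>d\<^sub>Z - b\<close> coordinates. Since all components of \<open>\<beta>\<^sub>\<Phi>\<close> are nonzero, a coordinate can agree
  for at most one \<open>\<theta>\<close>, so these agreement sets are pairwise disjoint and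
  \<open>|\<T>| (d\<^sub>Z - b) \<le> d\<^sub>Z\<close>.\<close>

lemma card_disjoint_family_mult_le:
  assumes "finite S" "finite I" "disjoint_family_on A I"
    and "\<And>i. i \<in> I \<Longrightarrow> A i \<subseteq> S" "\<And>i. i \<in> I \<Longrightarrow> m \<le> card (A i)"
  shows "card I * m \<le> card S"
proof -
  have fin_A: "finite (A i)" if "i \<in> I" for i
    using finite_subset[OF assms(4) assms(1)] that .
  have "card I * m \<le> (\<Sum>i\<in>I. card (A i))"
    using sum_mono[of I "\<lambda>_. m" "\<lambda>i. card (A i)"] assms(5) by simp
  also have "\<dots> = card (\<Union>i\<in>I. A i)"
    using assms(2,3) fin_A by (simp add: card_UN_disjoint disjoint_family_on_def)
  also have "\<dots> \<le> card S"
    using assms(1,4) by (intro card_mono) auto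
  finally show ?thesis .
qed

lemma card_coincide_ge_if_l0norm_le:
  fixes y phi :: "real ^ 'n"
  assumes "l0norm (y - t *\<^sub>R phi) \<le> b"
  shows "CARD('n) - b \<le> card {i. y $ i = t * phi $ i}"
proof -
  have "{i. (y - t *\<^sub>R phi) $ i \<noteq> 0} = UNIV - {i. y $ i = t * phi $ i}"
    by auto
  then have "card (UNIV - {i. y $ i = t * phi $ i}) \<le> b"
    using assms by (simp add: l0norm_def)
  then show ?thesis
    by (simp add: card_Diff_subset)
qed

lemma T_L0_subset_ratios:
  fixes y phi :: "real ^ 'n"
  assumes "\<forall>i. phi $ i \<noteq> 0" "b < CARD('n)"
  shows "T_L0 y phi b \<subseteq> range (\<lambda>i. y $ i / phi $ i)"
proof
  fix t assume "t \<in> T_L0 y phi b"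
  then have "CARD('n) - b \<le> card {i. y $ i = t * phi $ i}"
    by (simp add: T_L0_def card_coincide_ge_if_l0norm_le)
  with assms(2) have "card {i. y $ i = t * phi $ i} > 0"
    by linarith
  then obtain i where "y $ i = t * phi $ i"
    by (auto simp: card_gt_0_iff)
  with assms(1) show "t \<in> range (\<lambda>i. y $ i / phi $ i)"
    by (metis (mono_tags) nonzero_mult_div_cancel_right rangeI)
qed

lemma finite_T_L0:
  fixes y phi :: "real ^ 'n"
  assumes "\<forall>i. phi $ i \<noteq> 0" "b < CARD('n)"
  shows "finite (T_L0 y phi b)"
  using T_L0_subset_ratios[OF assms] by (rule finite_subset) simp

lemma card_T_L0_mult_le:
  fixes y phi :: "real ^ 'n"
  assumes "\<forall>i. phi $ i \<noteq> 0" "b < CARD('n)"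
  shows "card (T_L0 y phi b) * (CARD('n) - b) \<le> CARD('n)"
proof -
  have "disjoint_family_on (\<lambda>t. {i. y $ i = t * phi $ i}) (T_L0 y phi b)"
    using assms(1) by (auto simp: disjoint_family_on_def)
  then show ?thesis
    using finite_T_L0[OF assms]
    by (intro card_disjoint_family_mult_le[where S = UNIV, simplified])
       (auto simp: T_L0_def card_coincide_ge_if_l0norm_le)
qed

lemma le_floor_divide_if_mult_le:
  fixes k n b :: nat
  assumes "k * (n - b) \<le> n" "b < n"
  shows "real k \<le> of_int \<lfloor>real n / real (n - b)\<rfloor>"
proof -
  have "real k * real (n - b) \<le> real n"
    using assms(1) by (metis of_nat_le_iff of_nat_mult)
  then have "real k \<le> real n / real (n - b)"
    using assms(2) by (simp add: field_simps)
  then have "int k \<le> \<lfloor>real n / real (n - b)\<rfloor>"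
    by (simp add: le_floor_iff)
  then show ?thesis
    by (metis of_int_le_iff of_int_of_nat_eq)
qed

lemma floor_divide_diff_le:
  fixes n b :: nat
  assumes "b < n"
  shows "\<lfloor>real n / real (n - b)\<rfloor> \<le> int n"
proof -
  have "real n \<le> real n * real (n - b)"
    using assms by (simp add: mult_le_cancel_left1)
  then have "real n / real (n - b) \<le> real n"
    using assms by (simp add: divide_le_eq)
  then show ?thesis
    by (simp add: floor_le_iff)
qed

theorem mainTheorem5:
  fixes beta_Phi beta_y :: "real ^ 'n" and b :: nat
  assumes "\<forall>i. beta_Phi $ i \<noteq> 0"
    and "b < CARD('n)"
  shows "finite (T_L0 beta_y beta_Phi b)
       \<and> real (card (T_L0 beta_y beta_Phi b)) \<le> of_int \<lfloor>real CARD('n) / real (CARD('n) - b)\<rfloor>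
       \<and> \<lfloor>real CARD('n) / real (CARD('n) - b)\<rfloor> \<le> int CARD('n)
       \<and> (real b < real CARD('n) / 2 \<longrightarrow> card (T_L0 beta_y beta_Phi b) \<le> 1)"
proof -
  let ?k = "card (T_L0 beta_y beta_Phi b)"
  have packing: "?k * (CARD('n) - b) \<le> CARD('n)"
    using card_T_L0_mult_le[OF assms] .
  have "?k \<le> 1" if "real b < real CARD('n) / 2"
  proof (rule ccontr)
    assume "\<not> ?k \<le> 1"
    then have "2 * (CARD('n) - b) \<le> ?k * (CARD('n) - b)"
      by (intro mult_le_mono1) simp
    with packing have "2 * (CARD('n) - b) \<le> CARD('n)"
      by linarith
    with that show False by linarith
  qed
  then show ?thesis
    using finite_T_L0[OF assms] le_floor_divide_if_mult_le[OF packing assms(2)]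
      floor_divide_diff_le[OF assms(2)] by blast
qed

end
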